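(* In the recursion below (with any $\eta>0$, any initial policy $\pi_0$, $Q_1\equiv0$), suppose the bonuses $\mathrm{CB}_k\ge0$ are valid for every $k=1,\dots,K$. Then $$\sum_{k=1}^K\big(\langle\mu^*,r\rangle-\langle\mu^{\pi_k},r\rangle\big)\le 2\sum_{k=1}^K\langle\mu^{\pi_k},\mathrm{CB}_k\rangle+2H+\frac1\eta\mathcal H(\pi^*\|\pi_0)+\frac{\eta H^3K}{2}.$$
   Context: Discounted MDP with finite $\mathcal X$, $\mathcal A$, reward $r:\mathcal X\times\mathcal A\to[0,1]$, transition kernel $P$, discount $\gamma\in(0,1)$, initial distribution $\nu_0$, $H=1/(1-\gamma)$. $(Pf)(x,a)=\sum_{x'}P(x'|x,a)f(x')$. For a policy $\pi$, $\nu^\pi(x)=(1-\gamma)\sum_{t\ge0}\gamma^t\mathbb P_\pi[X_t=x]$ with $X_0\sim\nu_0$, $\mu^\pi(x,a)=\nu^\pi(x)\pi(a|x)$, $\langle\mu,f\rangle=\sum_{x,a}\mu(x,a)f(x,a)$; $\pi^*$ is an optimal policy, $\mu^*=\mu^{\pi^*}$. Conditional relative entropy: $\mathcal H(\pi\|\pi')=\sum_x\nu^\pi(x)\mathrm{KL}(\pi(\cdot|x)\|\pi'(\cdot|x))$. Recursion: $V_k(x)=\frac1\eta\log\sum_a\pi_{k-1}(a|x)e^{\eta Q_k(x,a)}$, $\pi_k(a|x)=\pi_{k-1}(a|x)e^{\eta(Q_k(x,a)-V_k(x))}$, $Q_{k+1}=\Pi_H[r+\mathrm{CB}_k+\gamma\widehat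 P_kV_k]$, where $\widehat P_k$ is any real function on $\mathcal X\times\mathcal A\times\mathcal X$ acting by $(\widehat P_kf)(x,a)=\sum_{x'}\widehat P_k(x'|x,a)f(x')$, and $\Pi_Hf(z)=\max(\min(f(z),H),0)$. Validity for epoch $k$: for all $(x,a)$, $\big|\gamma\sum_{x'}(P(x'|x,a)-\widehat P_k(x'|x,a))V_k(x')\big|\le\mathrm{CB}_k(x,a)$. *)

theory Defs
  imports Complex_Main "HOL-Library.Extended_Real"
begin

(* Finite state type 'x, finite action type 'a.
   Policies: pol x a = pol(a|x).  Kernels: P x a x' = P(x'|x,a). *)

definition is_dist :: "('x::finite \<Rightarrow> real) \<Rightarrow> bool" where
  "is_dist d \<longleftrightarrow> (\<forall>x. d x \<ge> 0) \<and> (\<Sum>x\<in>UNIV. d x) = 1"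

definition is_policy :: "('x::finite \<Rightarrow> 'a::finite \<Rightarrow> real) \<Rightarrow> bool" where
  "is_policy pol \<longleftrightarrow> (\<forall>x. is_dist (pol x))"

definition is_kernel :: "('x::finite \<Rightarrow> 'a::finite \<Rightarrow> 'x \<Rightarrow> real) \<Rightarrow> bool" where
  "is_kernel P \<longleftrightarrow> (\<forall>x a. is_dist (P x a))"

primrec state_dist ::
  "('x::finite \<Rightarrow> 'a::finite \<Rightarrow> 'x \<Rightarrow> real) \<Rightarrow> ('x \<Rightarrow> real) \<Rightarrow> ('x \<Rightarrow> 'a \<Rightarrow> real) \<Rightarrow> nat \<Rightarrow> 'x \<Rightarrow> real"
where
  "state_dist P nu0 pol 0 = nu0"
| "state_dist P nu0 pol (Suc t) =
     (\<lambda>y. \<Sum>x\<in>UNIV. \<Sum>a\<in>UNIV. state_dist P nu0 pol t x * pol x a * P x a y)"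

definition occ_state ::
  "real \<Rightarrow> ('x::finite \<Rightarrow> 'a::finite \<Rightarrow> 'x \<Rightarrow> real) \<Rightarrow> ('x \<Rightarrow> real) \<Rightarrow> ('x \<Rightarrow> 'a \<Rightarrow> real) \<Rightarrow> 'x \<Rightarrow> real"
where
  "occ_state \<gamma> P nu0 pol x = (1 - \<gamma>) * (\<Sum>t. \<gamma> ^ t * state_dist P nu0 pol t x)"

definition occ ::
  "real \<Rightarrow> ('x::finite \<Rightarrow> 'a::finite \<Rightarrow> 'x \<Rightarrow> real) \<Rightarrow> ('x \<Rightarrow> real) \<Rightarrow> ('x \<Rightarrow> 'a \<Rightarrow> real) \<Rightarrow> 'x \<Rightarrow> 'a \<Rightarrow> real"
where
  "occ \<gamma> P nu0 pol x a = occ_state \<gamma> P nu0 pol x * pol x a"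

definition pair :: "('x::finite \<Rightarrow> 'a::finite \<Rightarrow> real) \<Rightarrow> ('x \<Rightarrow> 'a \<Rightarrow> real) \<Rightarrow> real" where
  "pair mu f = (\<Sum>x\<in>UNIV. \<Sum>a\<in>UNIV. mu x a * f x a)"

definition kapply :: "('x::finite \<Rightarrow> 'a \<Rightarrow> 'x \<Rightarrow> real) \<Rightarrow> ('x \<Rightarrow> real) \<Rightarrow> 'x \<Rightarrow> 'a \<Rightarrow> real" where
  "kapply P f x a = (\<Sum>x'\<in>UNIV. P x a x' * f x')"

definition value_fun ::
  "real \<Rightarrow> ('x::finite \<Rightarrow> 'a::finite \<Rightarrow> 'x \<Rightarrow> real) \<Rightarrow> ('x \<Rightarrow> 'a \<Rightarrow> real) \<Rightarrow> ('x \<Rightarrow> 'a \<Rightarrow> real) \<Rightarrow> 'x \<Rightarrow> real"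
where
  "value_fun \<gamma> P r pol x0 =
     (\<Sum>t. \<gamma> ^ t * (\<Sum>x\<in>UNIV. \<Sum>a\<in>UNIV.
          state_dist P (\<lambda>y. if y = x0 then 1 else 0) pol t x * pol x a * r x a))"

definition optimal_policy ::
  "real \<Rightarrow> ('x::finite \<Rightarrow> 'a::finite \<Rightarrow> 'x \<Rightarrow> real) \<Rightarrow> ('x \<Rightarrow> 'a \<Rightarrow> real) \<Rightarrow> ('x \<Rightarrow> 'a \<Rightarrow> real) \<Rightarrow> bool"
where
  "optimal_policy \<gamma> P r pol_s \<longleftrightarrow> is_policy pol_s \<and>
     (\<forall>pol. is_policy pol \<longrightarrow> (\<forall>x. value_fun \<gamma> P r pol x \<le> value_fun \<gamma> P r pol_s x))"

definition KL :: "('a::finite \<Rightarrow> real) \<Rightarrow> ('a \<Rightarrow> real) \<Rightarrow> ereal" where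
  "KL p q = (if (\<forall>a. p a > 0 \<longrightarrow> q a > 0)
             then ereal (\<Sum>a\<in>{a. p a > 0}. p a * ln (p a / q a))
             else \<infinity>)"

(* conditional relative entropy H(pol || pol') = sum_x nu^pol(x) KL(pol(.|x) || pol'(.|x)),
   with 0 * infinity = 0 *)
definition cond_rel_ent ::
  "real \<Rightarrow> ('x::finite \<Rightarrow> 'a::finite \<Rightarrow> 'x \<Rightarrow> real) \<Rightarrow> ('x \<Rightarrow> real) \<Rightarrow> ('x \<Rightarrow> 'a \<Rightarrow> real) \<Rightarrow> ('x \<Rightarrow> 'a \<Rightarrow> real) \<Rightarrow> ereal"
where
  "cond_rel_ent \<gamma> P nu0 pol pol' = (\<Sum>x\<in>UNIV. ereal (occ_state \<gamma> P nu0 pol x) * KL (pol x) (pol' x))"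

definition clip :: "real \<Rightarrow> real \<Rightarrow> real" where
  "clip H v = max (min v H) 0"

end

theory Submission
  imports Defs
begin

text \<open>Validity of the bonuses squeezes \<open>Q (k+1) - \<gamma> P V k\<close> between \<open>r\<close> and \<open>r + 2 CB k\<close>,
  so by the Bellman flow equation of occupancy measures the regret of episode \<open>k\<close> is at most
  \<open>2 \<langle>\<mu>\<^sub>k, CB k\<rangle>\<close> plus the difference between the \<open>\<nu>\<^sup>*\<close>- and \<open>\<nu>\<^sub>k\<close>-averages of
  \<open>\<pi> Q (k+1) - V k\<close>. As \<open>V (k+1)\<close> is the (scaled) log-moment-generating function of
  \<open>Q (k+1)\<close> under \<open>\<pi>\<^sub>k\<close> and \<open>\<pi>\<^sub>k\<^sub>+\<^sub>1\<close> the corresponding exponential tilt, the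
  entropic three-point identity rewrites the comparator's term as \<open>V (k+1) - V k\<close> plus
  \<open>(KL(\<pi>\<^sup>* \<parallel> \<pi>\<^sub>k) - KL(\<pi>\<^sup>* \<parallel> \<pi>\<^sub>k\<^sub>+\<^sub>1)) / \<eta>\<close>, while for the learner
  \<open>V (k+1) \<le> \<pi>\<^sub>k Q (k+1) + \<eta>H\<^sup>2/2\<close>. Summed over \<open>k\<close>, values and divergences telescope;
  what remains is the drift of the learner's occupancy measure, at most \<open>\<gamma>\<eta>H\<^sup>2\<close> in
  \<open>\<ell>\<^sub>1\<close> per episode because one tilting step moves a policy by at most \<open>\<eta>H\<close>.\<close>

lemma sum_diff_telescope:
  fixes a b :: "nat \<Rightarrow> 'b::ab_group_add"
  assumes "m \<le> n"
  shows "(\<Sum>k=m..n. a k - b k) = a m - b n + (\<Sum>k=m..<n. a (Suc k) - b k)"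
  using assms
proof (induction n rule: dec_induct)
  case (step n)
  then show ?case by (simp add: algebra_simps)
qed simp

lemma sum_mult_le_half_sum_abs:
  fixes d f :: "'a \<Rightarrow> real"
  assumes "sum d A = 0" and f: "\<And>a. a \<in> A \<Longrightarrow> 0 \<le> f a \<and> f a \<le> c"
  shows "(\<Sum>a\<in>A. d a * f a) \<le> c / 2 * (\<Sum>a\<in>A. \<bar>d a\<bar>)"
proof -
  have "(\<Sum>a\<in>A. d a * f a) = (\<Sum>a\<in>A. d a * (f a - c / 2)) + c / 2 * sum d A"
    by (simp add: algebra_simps sum.distrib sum_subtractf sum_distrib_left sum_divide_distrib)
  also have "\<dots> = (\<Sum>a\<in>A. d a * (f a - c / 2))"
    using assms(1) by simp
  also have "\<dots> \<le> (\<Sum>a\<in>A. \<bar>d a\<bar> * (c / 2))"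
  proof (rule sum_mono)
    fix a assume "a \<in> A"
    then have "\<bar>f a - c / 2\<bar> \<le> c / 2" using f[of a] unfolding abs_le_iff by linarith
    then have "\<bar>d a\<bar> * \<bar>f a - c / 2\<bar> \<le> \<bar>d a\<bar> * (c / 2)" by (intro mult_left_mono) auto
    then show "d a * (f a - c / 2) \<le> \<bar>d a\<bar> * (c / 2)"
      by (metis abs_ge_self abs_mult order.trans)
  qed
  also have "\<dots> = c / 2 * (\<Sum>a\<in>A. \<bar>d a\<bar>)" by (simp add: sum_distrib_left mult.commute)
  finally show ?thesis .
qed

section \<open>Exponential weights\<close>

definition mgf :: "real \<Rightarrow> ('a::finite \<Rightarrow> real) \<Rightarrow> ('a \<Rightarrow> real) \<Rightarrow> real" where
  "mgf \<eta> p q = (\<Sum>a\<in>UNIV. p a * exp (\<eta> * q a))"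

definition log_mgf :: "real \<Rightarrow> ('a::finite \<Rightarrow> real) \<Rightarrow> ('a \<Rightarrow> real) \<Rightarrow> real" where
  "log_mgf \<eta> p q = (1 / \<eta>) * ln (mgf \<eta> p q)"

definition tilt :: "real \<Rightarrow> ('a::finite \<Rightarrow> real) \<Rightarrow> ('a \<Rightarrow> real) \<Rightarrow> 'a \<Rightarrow> real" where
  "tilt \<eta> p q a = p a * exp (\<eta> * (q a - log_mgf \<eta> p q))"

lemma mgf_bounds:
  assumes p: "is_dist p" and q: "\<And>a. 0 \<le> q a \<and> q a \<le> H" and "0 \<le> \<eta>"
  shows "1 \<le> mgf \<eta> p q" and "mgf \<eta> p q \<le> exp (\<eta> * H)"
proof -
  have "(\<Sum>a\<in>UNIV. p a * 1) \<le> mgf \<eta> p q"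
    unfolding mgf_def using assms by (intro sum_mono mult_left_mono) (auto simp: is_dist_def)
  then show "1 \<le> mgf \<eta> p q" using p by (simp add: is_dist_def)
  have "mgf \<eta> p q \<le> (\<Sum>a\<in>UNIV. p a * exp (\<eta> * H))"
    unfolding mgf_def using assms by (intro sum_mono mult_left_mono) (auto simp: is_dist_def intro: mult_left_mono)
  then show "mgf \<eta> p q \<le> exp (\<eta> * H)" using p by (simp add: is_dist_def flip: sum_distrib_right)
qed

lemma log_mgf_bounds:
  assumes p: "is_dist p" and q: "\<And>a. 0 \<le> q a \<and> q a \<le> H" and "0 < \<eta>"
  shows "0 \<le> log_mgf \<eta> p q \<and> log_mgf \<eta> p q \<le> H"
proof -
  note Z = mgf_bounds[of p q H \<eta>, OF p q]
  have "0 \<le> ln (mgf \<eta> p q)" using Z assms(3) by simp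
  moreover have "ln (mgf \<eta> p q) \<le> ln (exp (\<eta> * H))"
    using Z assms(3) by (intro ln_mono) auto
  ultimately show ?thesis using assms(3) by (simp add: log_mgf_def field_simps)
qed

lemma tilt_eq:
  assumes p: "is_dist p" and q: "\<And>a. 0 \<le> q a \<and> q a \<le> H" and "0 < \<eta>"
  shows "tilt \<eta> p q a = p a * exp (\<eta> * q a) / mgf \<eta> p q"
proof -
  have "0 < mgf \<eta> p q" using mgf_bounds(1)[of p q H \<eta>, OF p q] assms(3) by simp
  moreover have "\<eta> * (q a - log_mgf \<eta> p q) = \<eta> * q a - ln (mgf \<eta> p q)"
    using assms(3) by (simp add: log_mgf_def field_simps)
  ultimately show ?thesis by (simp add: tilt_def exp_diff)
qed

lemma is_dist_tilt:
  assumes p: "is_dist p" and q: "\<And>a. 0 \<le> q a \<and> q a \<le> H" and "0 < \<eta>"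
  shows "is_dist (tilt \<eta> p q)"
proof -
  have "0 < mgf \<eta> p q" using mgf_bounds(1)[of p q H \<eta>, OF p q] assms(3) by simp
  then show ?thesis using assms(1)
    by (auto simp: is_dist_def tilt_eq[of p q H \<eta>, OF p q assms(3)] mgf_def simp flip: sum_divide_distrib)
qed

lemma tilt_pos: "0 < p a \<Longrightarrow> 0 < tilt \<eta> p q a"
  by (simp add: tilt_def)

lemma log_mgf_zero: "is_dist p \<Longrightarrow> log_mgf \<eta> p (\<lambda>_. 0) = 0"
  by (simp add: log_mgf_def mgf_def is_dist_def)

lemma tilt_zero: "is_dist p \<Longrightarrow> tilt \<eta> p (\<lambda>_. 0) = p"
  by (rule ext) (simp add: tilt_def log_mgf_zero)

lemma max_diff_le_chord:
  fixes y z u :: real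
  assumes "1 \<le> y" "y \<le> u" "1 \<le> z" "z \<le> u" "1 < u"
  shows "max (y - z) 0 \<le> (y - 1) * (u - z) / (u - 1)"
proof (cases "y \<le> z")
  case True
  then show ?thesis using assms by (simp add: max_def divide_nonneg_pos)
next
  case False
  have "(y - 1) * (u - z) - (y - z) * (u - 1) = (z - 1) * (u - y)" by (simp add: algebra_simps)
  moreover have "0 \<le> (z - 1) * (u - y)" using assms by simp
  ultimately have "(y - z) * (u - 1) \<le> (y - 1) * (u - z)" by linarith
  then show ?thesis using assms False by (simp add: max_def pos_le_divide_eq)
qed

text \<open>After division by \<open>z\<close> the left-hand side is largest at \<open>z = exp (c/2)\<close>, where the
  claim reduces to \<open>tanh (c/4) \<le> c/2\<close>.\<close>
lemma exp_chord_gap_le: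
  fixes c z :: real
  assumes "0 < c" "1 \<le> z" "z \<le> exp c"
  shows "2 * (z - 1) * (exp c - z) \<le> c * (z * (exp c - 1))"
proof -
  define s where "s = exp (c / 2)"
  have s2: "exp c = s * s" unfolding s_def by (simp flip: exp_add)
  have "1 < s" unfolding s_def using assms by simp
  have "1 - c / 2 \<le> 1 / s"
    using exp_ge_add_one_self[of "- (c / 2)"] by (simp add: s_def exp_minus inverse_eq_divide)
  then have "s - c * s / 2 \<le> 1" using \<open>1 < s\<close> by (simp add: field_simps)
  then have "2 * (s - 1) \<le> (s + 1) * c" using assms(1) by (simp add: algebra_simps)
  then have "2 * (z * (s - 1) * (s - 1)) \<le> c * (z * (s * s - 1))"
    using \<open>1 < s\<close> assms(2) mult_left_mono[of "2 * (s - 1)" "(s + 1) * c" "z * (s - 1)"]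
    by (simp add: algebra_simps)
  moreover have "(z - 1) * (s * s - z) \<le> z * (s - 1) * (s - 1)"
    using zero_le_square[of "z - s"] by (simp add: algebra_simps)
  ultimately show ?thesis unfolding s2 by linarith
qed

lemma l1_dist_tilt_le:
  assumes p: "is_dist p" and q: "\<And>a. 0 \<le> q a \<and> q a \<le> H" and "0 < \<eta>" "0 < H"
  shows "(\<Sum>a\<in>UNIV. \<bar>tilt \<eta> p q a - p a\<bar>) \<le> \<eta> * H"
proof -
  define Z where "Z = mgf \<eta> p q"
  define u where "u = exp (\<eta> * H)"
  define y where "y a = exp (\<eta> * q a)" for a
  have Z: "1 \<le> Z" "Z \<le> u" unfolding Z_def u_def using mgf_bounds[of p q H \<eta>, OF p q] assms by auto
  have "1 < u" unfolding u_def using assms by simp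
  have y: "1 \<le> y a \<and> y a \<le> u" for a
    unfolding y_def u_def using q[of a] assms by (auto intro: mult_left_mono)
  have p0: "0 \<le> p a" for a using p by (simp add: is_dist_def)
  have p1: "sum p UNIV = 1" using p by (simp add: is_dist_def)
  have Z_eq: "Z = (\<Sum>a\<in>UNIV. p a * y a)" unfolding Z_def mgf_def y_def ..
  have "\<bar>tilt \<eta> p q a - p a\<bar> = p a * \<bar>y a - Z\<bar> / Z" for a
  proof -
    have "tilt \<eta> p q a - p a = p a * (y a - Z) / Z"
      using Z by (simp add: tilt_eq[of p q H \<eta>, OF p q assms(3)] field_simps flip: Z_def y_def)
    then show ?thesis using Z p0[of a] by (simp add: abs_mult)
  qed
  then have "(\<Sum>a\<in>UNIV. \<bar>tilt \<eta> p q a - p a\<bar>) = (\<Sum>a\<in>UNIV. p a * \<bar>y a - Z\<bar>) / Z"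
    by (simp add: sum_divide_distrib)
  also have "(\<Sum>a\<in>UNIV. p a * \<bar>y a - Z\<bar>) = 2 * (\<Sum>a\<in>UNIV. p a * max (y a - Z) 0)"
  proof -
    have "(\<Sum>a\<in>UNIV. p a * (y a - Z)) = 0"
      using p1 by (simp add: Z_eq right_diff_distrib sum_subtractf flip: sum_distrib_right)
    moreover have "p a * \<bar>y a - Z\<bar> = 2 * (p a * max (y a - Z) 0) - p a * (y a - Z)" for a
      by (simp add: abs_if max_def algebra_simps)
    ultimately show ?thesis by (simp add: sum_subtractf sum_distrib_left)
  qed
  txt \<open>The positive part is convex, hence below its chord on \<open>[1, u]\<close>; this bounds the
    total variation by a function of \<open>Z\<close> alone.\<close>
  also have "(\<Sum>a\<in>UNIV. p a * max (y a - Z) 0) \<le> (\<Sum>a\<in>UNIV. p a * ((y a - 1) * (u - Z) / (u - 1)))"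
    using y Z \<open>1 < u\<close> p0 by (intro sum_mono mult_left_mono max_diff_le_chord) auto
  also have "\<dots> = (\<Sum>a\<in>UNIV. p a * (y a - 1)) * ((u - Z) / (u - 1))"
    by (simp add: sum_distrib_right mult.assoc sum_divide_distrib)
  also have "(\<Sum>a\<in>UNIV. p a * (y a - 1)) = Z - 1"
    using p1 by (simp add: Z_eq right_diff_distrib sum_subtractf)
  finally have "(\<Sum>a\<in>UNIV. \<bar>tilt \<eta> p q a - p a\<bar>) \<le> 2 * ((Z - 1) * (u - Z) / (u - 1)) / Z"
    using Z by (simp add: divide_right_mono)
  also have "\<dots> \<le> \<eta> * H"
    using exp_chord_gap_le[of "\<eta> * H" Z] Z \<open>1 < u\<close> assms by (simp add: u_def field_simps)
  finally show ?thesis .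
qed

lemma log_mgf_le_tilt_mean:
  assumes p: "is_dist p" and q: "\<And>a. 0 \<le> q a \<and> q a \<le> H" and "0 < \<eta>"
  shows "log_mgf \<eta> p q \<le> (\<Sum>a\<in>UNIV. tilt \<eta> p q a * q a)"
proof -
  define W where "W = log_mgf \<eta> p q"
  have rho: "is_dist (tilt \<eta> p q)" by (rule is_dist_tilt[OF p q assms(3)])
  have "tilt \<eta> p q a - p a \<le> tilt \<eta> p q a * (\<eta> * (q a - W))" for a
  proof -
    define t where "t = \<eta> * (q a - W)"
    have "(1 - t) * exp t \<le> exp (- t) * exp t"
      using exp_ge_add_one_self[of "- t"] by (intro mult_right_mono) auto
    then have "p a * ((1 - t) * exp t) \<le> p a * 1"
      using p by (intro mult_left_mono) (auto simp: is_dist_def simp flip: exp_add)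
    then show ?thesis by (simp add: tilt_def W_def t_def algebra_simps)
  qed
  then have "(\<Sum>a\<in>UNIV. tilt \<eta> p q a - p a) \<le> (\<Sum>a\<in>UNIV. tilt \<eta> p q a * (\<eta> * (q a - W)))"
    by (rule sum_mono)
  moreover have "(\<Sum>a\<in>UNIV. tilt \<eta> p q a - p a) = 0"
    using rho p by (simp add: is_dist_def sum_subtractf)
  moreover have "(\<Sum>a\<in>UNIV. tilt \<eta> p q a * (\<eta> * (q a - W)))
      = \<eta> * (\<Sum>a\<in>UNIV. tilt \<eta> p q a * q a) - \<eta> * W * (\<Sum>a\<in>UNIV. tilt \<eta> p q a)"
    by (simp add: algebra_simps sum_subtractf sum_distrib_left)
  ultimately show ?thesis using rho assms(3) by (simp add: W_def is_dist_def)
qed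

lemma log_mgf_le_mean:
  assumes p: "is_dist p" and q: "\<And>a. 0 \<le> q a \<and> q a \<le> H" and "0 < \<eta>" "0 < H"
  shows "log_mgf \<eta> p q \<le> (\<Sum>a\<in>UNIV. p a * q a) + \<eta> * H\<^sup>2 / 2"
proof -
  have "(\<Sum>a\<in>UNIV. tilt \<eta> p q a - p a) = 0"
    using is_dist_tilt[OF p q assms(3)] p by (simp add: is_dist_def sum_subtractf)
  then have "(\<Sum>a\<in>UNIV. (tilt \<eta> p q a - p a) * q a) \<le> H / 2 * (\<Sum>a\<in>UNIV. \<bar>tilt \<eta> p q a - p a\<bar>)"
    using q by (intro sum_mult_le_half_sum_abs) auto
  also have "\<dots> \<le> H / 2 * (\<eta> * H)"
    using l1_dist_tilt_le[of p q H \<eta>, OF p q assms(3,4)] assms(4) by (intro mult_left_mono) auto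
  also have "\<dots> = \<eta> * H\<^sup>2 / 2" by (simp add: power2_eq_square)
  finally have "(\<Sum>a\<in>UNIV. (tilt \<eta> p q a - p a) * q a) \<le> \<eta> * H\<^sup>2 / 2" .
  moreover have "(\<Sum>a\<in>UNIV. (tilt \<eta> p q a - p a) * q a)
      = (\<Sum>a\<in>UNIV. tilt \<eta> p q a * q a) - (\<Sum>a\<in>UNIV. p a * q a)"
    by (simp add: left_diff_distrib sum_subtractf)
  ultimately show ?thesis using log_mgf_le_tilt_mean[of p q H \<eta>, OF p q assms(3)] by linarith
qed

definition KL_fin :: "('a::finite \<Rightarrow> real) \<Rightarrow> ('a \<Rightarrow> real) \<Rightarrow> real" where
  "KL_fin p q = (\<Sum>a\<in>{a. p a > 0}. p a * ln (p a / q a))"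

lemma KL_eq_KL_fin: "(\<And>a. 0 < p a \<Longrightarrow> 0 < q a) \<Longrightarrow> KL p q = ereal (KL_fin p q)"
  by (simp add: KL_def KL_fin_def)

lemma KL_fin_nonneg:
  assumes p: "is_dist p" and q: "is_dist q" and supp: "\<And>a. 0 < p a \<Longrightarrow> 0 < q a"
  shows "0 \<le> KL_fin p q"
proof -
  let ?S = "{a. p a > 0}"
  have "p a - q a \<le> p a * ln (p a / q a)" if "a \<in> ?S" for a
  proof -
    have pa: "0 < p a" and qa: "0 < q a" using that supp by auto
    have "ln (q a / p a) \<le> q a / p a - 1" using pa qa by (intro ln_le_minus_one) auto
    then have "p a * (1 - q a / p a) \<le> p a * ln (p a / q a)"
      using pa qa by (intro mult_left_mono) (auto simp: ln_div)
    then show ?thesis using pa by (simp add: algebra_simps)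
  qed
  then have "(\<Sum>a\<in>?S. p a - q a) \<le> KL_fin p q" unfolding KL_fin_def by (rule sum_mono)
  moreover have "sum p ?S = sum p UNIV"
    using p by (intro sum.mono_neutral_left) (auto simp: is_dist_def order_less_le)
  moreover have "sum q ?S \<le> sum q UNIV"
    using q by (intro sum_mono2) (auto simp: is_dist_def)
  ultimately show ?thesis using p q by (simp add: sum_subtractf is_dist_def)
qed

text \<open>The three-point identity of mirror descent with the entropic mirror map.\<close>
lemma KL_fin_tilt:
  assumes p: "is_dist p" and q: "\<And>a. 0 \<le> q a \<and> q a \<le> H" and "0 < \<eta>"
    and ps: "is_dist ps" and supp: "\<And>a. 0 < ps a \<Longrightarrow> 0 < p a"
  shows "(\<Sum>a\<in>UNIV. ps a * (q a - log_mgf \<eta> p q))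
     = (KL_fin ps p - KL_fin ps (tilt \<eta> p q)) / \<eta>"
proof -
  let ?S = "{a. ps a > 0}" and ?g = "\<lambda>a. \<eta> * (q a - log_mgf \<eta> p q)"
  have "KL_fin ps p - KL_fin ps (tilt \<eta> p q) = (\<Sum>a\<in>?S. ps a * ?g a)"
    unfolding KL_fin_def sum_subtractf[symmetric]
  proof (rule sum.cong)
    fix a assume "a \<in> ?S"
    then have "0 < ps a" "0 < p a" using supp by auto
    then show "ps a * ln (ps a / p a) - ps a * ln (ps a / tilt \<eta> p q a) = ps a * ?g a"
      by (simp add: tilt_def ln_div ln_mult algebra_simps)
  qed simp
  also have "\<dots> = (\<Sum>a\<in>UNIV. ps a * ?g a)"
    using ps by (intro sum.mono_neutral_left) (auto simp: is_dist_def order_less_le)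
  also have "\<dots> = \<eta> * (\<Sum>a\<in>UNIV. ps a * (q a - log_mgf \<eta> p q))"
    by (simp add: sum_distrib_left algebra_simps)
  finally show ?thesis using assms(3) by simp
qed

section \<open>Discounted occupancy measures\<close>

lemma is_dist_le_1: "is_dist d \<Longrightarrow> d x \<le> 1"
  unfolding is_dist_def using member_le_sum[of x UNIV d] by auto

lemma is_dist_state_dist:
  assumes P: "is_kernel P" and nu0: "is_dist nu0" and pol: "is_policy pol"
  shows "is_dist (state_dist P nu0 pol t)"
proof (induction t)
  case 0
  then show ?case using nu0 by simp
next
  case (Suc t)
  let ?d = "state_dist P nu0 pol t"
  have nonneg: "0 \<le> state_dist P nu0 pol (Suc t) y" for y
    using Suc P pol unfolding is_dist_def is_kernel_def is_policy_def
    by (auto intro!: sum_nonneg mult_nonneg_nonneg)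
  have "(\<Sum>y\<in>UNIV. state_dist P nu0 pol (Suc t) y)
      = (\<Sum>x\<in>UNIV. \<Sum>y\<in>UNIV. \<Sum>a\<in>UNIV. ?d x * pol x a * P x a y)"
    by (simp only: state_dist.simps) (rule sum.swap)
  also have "\<dots> = (\<Sum>x\<in>UNIV. \<Sum>a\<in>UNIV. ?d x * pol x a * (\<Sum>y\<in>UNIV. P x a y))"
    by (simp only: sum_distrib_left) (intro sum.cong refl sum.swap)
  also have "\<dots> = (\<Sum>x\<in>UNIV. ?d x * (\<Sum>a\<in>UNIV. pol x a))"
    using P by (simp add: is_kernel_def is_dist_def sum_distrib_left)
  also have "\<dots> = 1"
    using pol Suc by (simp add: is_policy_def is_dist_def)
  finally show ?case using nonneg by (simp add: is_dist_def)
qed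

lemma summable_discounted_state_dist:
  assumes "is_kernel P" "is_dist nu0" "is_policy pol" and "0 \<le> \<gamma>" "\<gamma> < 1"
  shows "summable (\<lambda>t. \<gamma> ^ t * state_dist P nu0 pol t x)"
proof (rule summable_comparison_test)
  show "\<exists>N. \<forall>t\<ge>N. norm (\<gamma> ^ t * state_dist P nu0 pol t x) \<le> \<gamma> ^ t"
    using is_dist_state_dist[OF assms(1-3)] is_dist_le_1[OF is_dist_state_dist[OF assms(1-3)]] assms(4)
    by (auto simp: abs_mult is_dist_def intro!: mult_left_le)
  show "summable (\<lambda>t. \<gamma> ^ t)" using assms(4,5) by simp
qed

lemma is_dist_occ_state:
  assumes P: "is_kernel P" and nu0: "is_dist nu0" and pol: "is_policy pol"
    and "0 \<le> \<gamma>" "\<gamma> < 1"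
  shows "is_dist (occ_state \<gamma> P nu0 pol)"
proof -
  note summable = summable_discounted_state_dist[OF assms]
  note d = is_dist_state_dist[OF P nu0 pol]
  have "0 \<le> occ_state \<gamma> P nu0 pol x" for x
    unfolding occ_state_def using assms(4,5) d summable
    by (intro mult_nonneg_nonneg suminf_nonneg) (auto simp: is_dist_def)
  moreover have "(\<Sum>x\<in>UNIV. occ_state \<gamma> P nu0 pol x) = 1"
  proof -
    have "(\<Sum>x\<in>UNIV. occ_state \<gamma> P nu0 pol x)
        = (1 - \<gamma>) * (\<Sum>x\<in>UNIV. \<Sum>t. \<gamma> ^ t * state_dist P nu0 pol t x)"
      by (simp add: occ_state_def sum_distrib_left)
    also have "\<dots> = (1 - \<gamma>) * (\<Sum>t. \<Sum>x\<in>UNIV. \<gamma> ^ t * state_dist P nu0 pol t x)"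
      using summable by (subst suminf_sum) auto
    also have "\<dots> = (1 - \<gamma>) * (\<Sum>t. \<gamma> ^ t)"
      using d by (simp add: is_dist_def flip: sum_distrib_left)
    finally show ?thesis using assms(4,5) by (simp add: suminf_geometric)
  qed
  ultimately show ?thesis by (simp add: is_dist_def)
qed

lemma occ_state_flow:
  assumes "is_kernel P" "is_dist nu0" "is_policy pol" and "0 \<le> \<gamma>" "\<gamma> < 1"
  shows "occ_state \<gamma> P nu0 pol y = (1 - \<gamma>) * nu0 y
     + \<gamma> * (\<Sum>x\<in>UNIV. \<Sum>a\<in>UNIV. occ_state \<gamma> P nu0 pol x * pol x a * P x a y)"
proof -
  note summable = summable_discounted_state_dist[OF assms]
  define S where "S x = (\<Sum>t. \<gamma> ^ t * state_dist P nu0 pol t x)" for x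
  have "S y - nu0 y = (\<Sum>t. \<gamma> ^ Suc t * state_dist P nu0 pol (Suc t) y)"
    unfolding S_def using suminf_split_head[OF summable[of y]] by simp
  also have "\<dots> = (\<Sum>t. \<Sum>x\<in>UNIV. \<Sum>a\<in>UNIV. (\<gamma> * pol x a * P x a y) * (\<gamma> ^ t * state_dist P nu0 pol t x))"
    by (simp add: sum_distrib_left algebra_simps)
  also have "\<dots> = (\<Sum>x\<in>UNIV. \<Sum>a\<in>UNIV. (\<gamma> * pol x a * P x a y) * S x)"
    unfolding S_def using summable by (simp add: suminf_sum summable_sum suminf_mult)
  finally have "S y = nu0 y + \<gamma> * (\<Sum>x\<in>UNIV. \<Sum>a\<in>UNIV. S x * pol x a * P x a y)"
    by (simp add: sum_distrib_left algebra_simps)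
  then show ?thesis
    unfolding occ_state_def S_def[symmetric] by (simp add: sum_distrib_left algebra_simps)
qed

lemma pair_occ:
  "pair (occ \<gamma> P nu0 pol) f = (\<Sum>x\<in>UNIV. occ_state \<gamma> P nu0 pol x * (\<Sum>a\<in>UNIV. pol x a * f x a))"
  unfolding pair_def occ_def by (simp add: sum_distrib_left mult.assoc)

lemma pair_mono: "(\<And>x a. 0 \<le> mu x a) \<Longrightarrow> (\<And>x a. f x a \<le> g x a) \<Longrightarrow> pair mu f \<le> pair mu g"
  unfolding pair_def by (intro sum_mono mult_left_mono) auto

lemma pair_add: "pair mu (\<lambda>x a. f x a + g x a) = pair mu f + pair mu g"
  unfolding pair_def by (simp add: distrib_left sum.distrib)

lemma pair_diff: "pair mu (\<lambda>x a. f x a - g x a) = pair mu f - pair mu g"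
  unfolding pair_def by (simp add: right_diff_distrib sum_subtractf)

lemma pair_cmult: "pair mu (\<lambda>x a. c * f x a) = c * pair mu f"
  unfolding pair_def by (simp add: sum_distrib_left algebra_simps)

lemma occ_nonneg:
  "is_kernel P \<Longrightarrow> is_dist nu0 \<Longrightarrow> is_policy pol \<Longrightarrow> 0 \<le> \<gamma> \<Longrightarrow> \<gamma> < 1 \<Longrightarrow> 0 \<le> occ \<gamma> P nu0 pol x a"
  using is_dist_occ_state[of P nu0 pol \<gamma>] unfolding occ_def is_dist_def is_policy_def by simp

lemma kapply_bounds:
  assumes "is_kernel P" and "\<And>y. 0 \<le> f y \<and> f y \<le> c"
  shows "0 \<le> kapply P f x a \<and> kapply P f x a \<le> c"
proof -
  have P: "is_dist (P x a)" using assms(1) by (simp add: is_kernel_def)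
  have "0 \<le> kapply P f x a" unfolding kapply_def
    using P assms(2) by (intro sum_nonneg mult_nonneg_nonneg) (auto simp: is_dist_def)
  moreover have "kapply P f x a \<le> (\<Sum>y\<in>UNIV. P x a y * c)" unfolding kapply_def
    using P assms(2) by (intro sum_mono mult_left_mono) (auto simp: is_dist_def)
  ultimately show ?thesis using P by (simp add: is_dist_def flip: sum_distrib_right)
qed

lemma pair_occ_kapply:
  assumes "is_kernel P" "is_dist nu0" "is_policy pol" and "0 \<le> \<gamma>" "\<gamma> < 1"
  shows "pair (occ \<gamma> P nu0 pol) (\<lambda>x a. \<gamma> * kapply P f x a)
    = (\<Sum>y\<in>UNIV. occ_state \<gamma> P nu0 pol y * f y) - (1 - \<gamma>) * (\<Sum>y\<in>UNIV. nu0 y * f y)"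
proof -
  let ?n = "occ_state \<gamma> P nu0 pol"
  let ?g = "\<lambda>x a y. \<gamma> * ?n x * pol x a * P x a y * f y"
  have "?n y * f y = (1 - \<gamma>) * (nu0 y * f y) + (\<Sum>x\<in>UNIV. \<Sum>a\<in>UNIV. ?g x a y)" for y
  proof -
    have "?n y * f y = ((1 - \<gamma>) * nu0 y + \<gamma> * (\<Sum>x\<in>UNIV. \<Sum>a\<in>UNIV. ?n x * pol x a * P x a y)) * f y"
      by (rule arg_cong[OF occ_state_flow[OF assms]])
    also have "\<dots> = (1 - \<gamma>) * (nu0 y * f y) + (\<Sum>x\<in>UNIV. \<Sum>a\<in>UNIV. ?g x a y)"
      by (simp add: algebra_simps sum_distrib_left)
    finally show ?thesis .
  qed
  then have "(\<Sum>y\<in>UNIV. ?n y * f y)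
      = (1 - \<gamma>) * (\<Sum>y\<in>UNIV. nu0 y * f y) + (\<Sum>y\<in>UNIV. \<Sum>x\<in>UNIV. \<Sum>a\<in>UNIV. ?g x a y)"
    by (simp add: sum.distrib sum_distrib_left)
  also have "(\<Sum>y\<in>UNIV. \<Sum>x\<in>UNIV. \<Sum>a\<in>UNIV. ?g x a y) = (\<Sum>x\<in>UNIV. \<Sum>y\<in>UNIV. \<Sum>a\<in>UNIV. ?g x a y)"
    by (rule sum.swap)
  also have "\<dots> = (\<Sum>x\<in>UNIV. \<Sum>a\<in>UNIV. \<Sum>y\<in>UNIV. ?g x a y)"
    by (intro sum.cong refl sum.swap)
  also have "\<dots> = pair (occ \<gamma> P nu0 pol) (\<lambda>x a. \<gamma> * kapply P f x a)"
    unfolding pair_def occ_def kapply_def by (simp add: sum_distrib_left mult_ac)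
  finally show ?thesis by simp
qed

lemma sum_abs_kernel_le:
  assumes "is_kernel P"
  shows "(\<Sum>y\<in>UNIV. \<bar>\<Sum>x\<in>UNIV. \<Sum>a\<in>UNIV. g x a * P x a y\<bar>) \<le> (\<Sum>x\<in>UNIV. \<Sum>a\<in>UNIV. \<bar>g x a\<bar>)"
proof -
  have P0: "0 \<le> P x a y" and P1: "(\<Sum>y\<in>UNIV. P x a y) = 1" for x a y
    using assms by (auto simp: is_kernel_def is_dist_def)
  have "(\<Sum>y\<in>UNIV. \<bar>\<Sum>x\<in>UNIV. \<Sum>a\<in>UNIV. g x a * P x a y\<bar>)
      \<le> (\<Sum>y\<in>UNIV. \<Sum>x\<in>UNIV. \<Sum>a\<in>UNIV. \<bar>g x a\<bar> * P x a y)"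
    using P0 by (intro sum_mono order.trans[OF sum_abs] order.trans[OF sum_abs])
      (simp add: abs_mult)
  also have "\<dots> = (\<Sum>x\<in>UNIV. \<Sum>y\<in>UNIV. \<Sum>a\<in>UNIV. \<bar>g x a\<bar> * P x a y)"
    by (rule sum.swap)
  also have "\<dots> = (\<Sum>x\<in>UNIV. \<Sum>a\<in>UNIV. \<Sum>y\<in>UNIV. \<bar>g x a\<bar> * P x a y)"
    by (intro sum.cong refl sum.swap)
  also have "\<dots> = (\<Sum>x\<in>UNIV. \<Sum>a\<in>UNIV. \<bar>g x a\<bar>)"
    by (simp add: P1 flip: sum_distrib_left)
  finally show ?thesis .
qed

text \<open>By the flow equation \<open>d = \<nu>\<^sup>\<pi>\<^sup>' - \<nu>\<^sup>\<pi>\<close> solves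
  \<open>d = \<gamma> P\<^sup>T (\<pi>' d + \<nu>\<^sup>\<pi> (\<pi>' - \<pi>))\<close>, and a stochastic kernel does not increase
  \<open>\<ell>\<^sub>1\<close>-norms.\<close>
lemma occ_state_l1_diff_le:
  assumes P: "is_kernel P" and nu0: "is_dist nu0" and pol: "is_policy pol" and pol': "is_policy pol'"
    and "0 \<le> \<gamma>" "\<gamma> < 1"
    and \<delta>: "\<And>x. (\<Sum>a\<in>UNIV. \<bar>pol' x a - pol x a\<bar>) \<le> \<delta>"
  shows "(\<Sum>y\<in>UNIV. \<bar>occ_state \<gamma> P nu0 pol' y - occ_state \<gamma> P nu0 pol y\<bar>) \<le> \<gamma> * \<delta> / (1 - \<gamma>)"
proof -
  let ?n = "occ_state \<gamma> P nu0 pol" and ?n' = "occ_state \<gamma> P nu0 pol'"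
  define d where "d y = ?n' y - ?n y" for y
  define g where "g x a = d x * pol' x a + ?n x * (pol' x a - pol x a)" for x a
  have n: "is_dist ?n" by (rule is_dist_occ_state[OF P nu0 pol assms(5,6)])
  have pol'1: "(\<Sum>a\<in>UNIV. pol' x a) = 1" and pol'0: "0 \<le> pol' x a" for x a
    using pol' by (auto simp: is_policy_def is_dist_def)
  have dy: "d y = \<gamma> * (\<Sum>x\<in>UNIV. \<Sum>a\<in>UNIV. g x a * P x a y)" for y
    unfolding d_def g_def
    by (subst (1 2) occ_state_flow[OF P nu0 _ assms(5,6)]) (use pol pol' in
        \<open>simp_all add: sum_subtractf sum.distrib algebra_simps\<close>)
  have "(\<Sum>y\<in>UNIV. \<bar>d y\<bar>) = \<gamma> * (\<Sum>y\<in>UNIV. \<bar>\<Sum>x\<in>UNIV. \<Sum>a\<in>UNIV. g x a * P x a y\<bar>)"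
    unfolding sum_distrib_left by (rule sum.cong) (use assms(5) in \<open>simp_all only: dy abs_mult abs_of_nonneg\<close>)
  also have "\<dots> \<le> \<gamma> * (\<Sum>x\<in>UNIV. \<Sum>a\<in>UNIV. \<bar>g x a\<bar>)"
    using sum_abs_kernel_le[OF P] assms(5) by (rule mult_left_mono)
  also have "\<dots> \<le> \<gamma> * (\<Sum>x\<in>UNIV. \<bar>d x\<bar> + ?n x * \<delta>)"
  proof (intro mult_left_mono sum_mono)
    fix x
    have "(\<Sum>a\<in>UNIV. \<bar>g x a\<bar>) \<le> (\<Sum>a\<in>UNIV. \<bar>d x\<bar> * pol' x a + ?n x * \<bar>pol' x a - pol x a\<bar>)"
      unfolding g_def using n pol'0
      by (intro sum_mono order.trans[OF abs_triangle_ineq]) (simp add: abs_mult is_dist_def)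
    also have "\<dots> \<le> \<bar>d x\<bar> + ?n x * \<delta>"
      using n \<delta>[of x] by (simp add: sum.distrib pol'1 is_dist_def mult_left_mono flip: sum_distrib_left)
    finally show "(\<Sum>a\<in>UNIV. \<bar>g x a\<bar>) \<le> \<bar>d x\<bar> + ?n x * \<delta>" .
  qed (use assms(5) in simp)
  also have "\<dots> = \<gamma> * ((\<Sum>x\<in>UNIV. \<bar>d x\<bar>) + \<delta>)"
    using n by (simp add: sum.distrib is_dist_def flip: sum_distrib_right)
  finally have "(1 - \<gamma>) * (\<Sum>y\<in>UNIV. \<bar>d y\<bar>) \<le> \<gamma> * \<delta>" by (simp add: algebra_simps)
  then show ?thesis using assms(6) by (simp add: d_def field_simps)
qed

definition cond_rel_ent_fin ::
  "real \<Rightarrow> ('x::finite \<Rightarrow> 'a::finite \<Rightarrow> 'x \<Rightarrow> real) \<Rightarrow> ('x \<Rightarrow> real) \<Rightarrow> ('x \<Rightarrow> 'a \<Rightarrow> real) \<Rightarrow> ('x \<Rightarrow> 'a \<Rightarrow> real) \<Rightarrow> real"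
where
  "cond_rel_ent_fin \<gamma> P nu0 pol pol' = (\<Sum>x\<in>UNIV. occ_state \<gamma> P nu0 pol x * KL_fin (pol x) (pol' x))"

lemma cond_rel_ent_eq_fin:
  assumes "\<And>x a. 0 < occ_state \<gamma> P nu0 pol x \<Longrightarrow> 0 < pol x a \<Longrightarrow> 0 < pol' x a"
    and "is_dist (occ_state \<gamma> P nu0 pol)"
  shows "cond_rel_ent \<gamma> P nu0 pol pol' = ereal (cond_rel_ent_fin \<gamma> P nu0 pol pol')"
  unfolding cond_rel_ent_def cond_rel_ent_fin_def sum_ereal[symmetric]
proof (rule sum.cong)
  fix x
  show "ereal (occ_state \<gamma> P nu0 pol x) * KL (pol x) (pol' x)
      = ereal (occ_state \<gamma> P nu0 pol x * KL_fin (pol x) (pol' x))"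
  proof (cases "0 < occ_state \<gamma> P nu0 pol x")
    case True
    then show ?thesis using assms(1) by (simp add: KL_eq_KL_fin)
  next
    case False
    then have "occ_state \<gamma> P nu0 pol x = 0" using assms(2) by (simp add: is_dist_def order_less_le)
    then show ?thesis by (simp flip: zero_ereal_def)
  qed
qed simp

lemma cond_rel_ent_eq_infinity:
  assumes "0 < occ_state \<gamma> P nu0 pol x" "0 < pol x a" "\<not> 0 < pol' x a"
  shows "cond_rel_ent \<gamma> P nu0 pol pol' = \<infinity>"
proof -
  have "ereal (occ_state \<gamma> P nu0 pol x) * KL (pol x) (pol' x) = \<infinity>"
    using assms by (auto simp: KL_def)
  then show ?thesis unfolding cond_rel_ent_def sum_Pinfty by auto
qed

lemma cond_rel_ent_fin_nonneg:
  assumes "\<And>x a. 0 < occ_state \<gamma> P nu0 pol x \<Longrightarrow> 0 < pol x a \<Longrightarrow> 0 < pol' x a"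
    and "is_dist (occ_state \<gamma> P nu0 pol)" "is_policy pol" "is_policy pol'"
  shows "0 \<le> cond_rel_ent_fin \<gamma> P nu0 pol pol'"
  unfolding cond_rel_ent_fin_def
proof (rule sum_nonneg)
  fix x
  show "0 \<le> occ_state \<gamma> P nu0 pol x * KL_fin (pol x) (pol' x)"
  proof (cases "0 < occ_state \<gamma> P nu0 pol x")
    case True
    then show ?thesis using assms by (simp add: KL_fin_nonneg is_policy_def)
  next
    case False
    then show ?thesis using assms(2) by (simp add: is_dist_def order_less_le)
  qed
qed

section \<open>The optimistic exponential-weights scheme\<close>

locale optimistic_mirror_descent =
  fixes P :: "'x::finite \<Rightarrow> 'a::finite \<Rightarrow> 'x \<Rightarrow> real"
    and r :: "'x \<Rightarrow> 'a \<Rightarrow> real"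
    and \<gamma> \<eta> :: real
    and nu0 :: "'x \<Rightarrow> real"
    and pol_s :: "'x \<Rightarrow> 'a \<Rightarrow> real"
    and pol :: "nat \<Rightarrow> 'x \<Rightarrow> 'a \<Rightarrow> real"
    and Q CB :: "nat \<Rightarrow> 'x \<Rightarrow> 'a \<Rightarrow> real"
    and V :: "nat \<Rightarrow> 'x \<Rightarrow> real"
    and Phat :: "nat \<Rightarrow> 'x \<Rightarrow> 'a \<Rightarrow> 'x \<Rightarrow> real"
    and K :: nat
  assumes kernel: "is_kernel P"
    and rew: "\<And>x a. 0 \<le> r x a \<and> r x a \<le> 1"
    and gam: "0 \<le> \<gamma>" "\<gamma> < 1"
    and init: "is_dist nu0"
    and comparator: "is_policy pol_s"
    and eta: "0 < \<eta>"
    and pol0: "is_policy (pol 0)"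
    and Q1: "\<And>x a. Q 1 x a = 0"
    and V_rec: "\<And>k x. 1 \<le> k \<Longrightarrow> k \<le> K \<Longrightarrow> V k x = log_mgf \<eta> (pol (k - 1) x) (Q k x)"
    and pol_rec: "\<And>k x. 1 \<le> k \<Longrightarrow> k \<le> K \<Longrightarrow> pol k x = tilt \<eta> (pol (k - 1) x) (Q k x)"
    and Q_rec: "\<And>k x a. 1 \<le> k \<Longrightarrow> k \<le> K \<Longrightarrow>
        Q (k + 1) x a = clip (1 / (1 - \<gamma>)) (r x a + CB k x a + \<gamma> * kapply (Phat k) (V k) x a)"
    and CB_nonneg: "\<And>k x a. 1 \<le> k \<Longrightarrow> k \<le> K \<Longrightarrow> 0 \<le> CB k x a"
    and valid: "\<And>k x a. 1 \<le> k \<Longrightarrow> k \<le> K \<Longrightarrow>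
        \<bar>\<gamma> * (\<Sum>x'\<in>UNIV. (P x a x' - Phat k x a x') * V k x')\<bar> \<le> CB k x a"
begin

abbreviation H :: real where "H \<equiv> 1 / (1 - \<gamma>)"

abbreviation nu_s :: "'x \<Rightarrow> real" where "nu_s \<equiv> occ_state \<gamma> P nu0 pol_s"

abbreviation nu :: "nat \<Rightarrow> 'x \<Rightarrow> real" where "nu k \<equiv> occ_state \<gamma> P nu0 (pol k)"

text \<open>\<open>V (Suc k)\<close> and \<open>pol (Suc k)\<close>, also for \<open>k = K\<close>, where the recursion leaves them
  unspecified.\<close>
definition V_next :: "nat \<Rightarrow> 'x \<Rightarrow> real" where
  "V_next k x = log_mgf \<eta> (pol k x) (Q (k + 1) x)"

definition pol_next :: "nat \<Rightarrow> 'x \<Rightarrow> 'a \<Rightarrow> real" where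
  "pol_next k x = tilt \<eta> (pol k x) (Q (k + 1) x)"

lemma H_pos: "0 < H"
  using gam by simp

lemma H_eq: "1 + \<gamma> * H = H"
  using gam by (simp add: field_simps)

lemma H_square_eq: "H\<^sup>2 + \<gamma> * H ^ 3 = H ^ 3"
  using gam by (simp add: divide_simps power2_eq_square power3_eq_cube)

lemma Q_bounds: "1 \<le> k \<Longrightarrow> k \<le> K + 1 \<Longrightarrow> 0 \<le> Q k x a \<and> Q k x a \<le> H"
proof (cases k)
  case (Suc j)
  assume "1 \<le> k" "k \<le> K + 1"
  then show ?thesis
    using Q1 Q_rec[of j] H_pos Suc by (cases "j = 0") (auto simp: clip_def)
qed simp

lemma V_Suc: "k < K \<Longrightarrow> V (Suc k) = V_next k"
  using V_rec by (auto simp: V_next_def)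

lemma pol_Suc: "k < K \<Longrightarrow> pol (Suc k) = pol_next k"
  using pol_rec by (auto simp: pol_next_def)

lemma is_policy_pol_next: "is_policy (pol k) \<Longrightarrow> k \<le> K \<Longrightarrow> is_policy (pol_next k)"
  unfolding is_policy_def pol_next_def using Q_bounds eta by (auto intro!: is_dist_tilt[where H = H])

lemma is_policy_pol: "k \<le> K \<Longrightarrow> is_policy (pol k)"
  by (induction k) (auto simp: pol0 pol_Suc is_policy_pol_next)

lemma pol_pos: "k \<le> K \<Longrightarrow> 0 < pol 0 x a \<Longrightarrow> 0 < pol k x a"
  by (induction k) (auto simp: pol_Suc pol_next_def tilt_pos)

lemma V_next_bounds: "k \<le> K \<Longrightarrow> 0 \<le> V_next k x \<and> V_next k x \<le> H"
  unfolding V_next_def using is_policy_pol Q_bounds eta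
  by (intro log_mgf_bounds) (auto simp: is_policy_def)

lemma V_bounds: "1 \<le> k \<Longrightarrow> k \<le> K \<Longrightarrow> 0 \<le> V k x \<and> V k x \<le> H"
  using V_Suc[of "k - 1"] V_next_bounds[of "k - 1"] by (cases k) auto

lemma Q_1: "Q 1 x = (\<lambda>_. 0)"
  using Q1 by auto

lemma V_1: "1 \<le> K \<Longrightarrow> V 1 x = 0"
  using V_rec[of 1, unfolded Q_1] pol0 by (simp add: is_policy_def log_mgf_zero)

lemma pol_1: "1 \<le> K \<Longrightarrow> pol 1 = pol 0"
  using pol_rec[of 1, unfolded Q_1] pol0 by (auto simp: is_policy_def tilt_zero)

lemma Q_sandwich:
  assumes "1 \<le> k" "k \<le> K"
  shows "r x a + \<gamma> * kapply P (V k) x a \<le> Q (k + 1) x a"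
    and "Q (k + 1) x a \<le> r x a + \<gamma> * kapply P (V k) x a + 2 * CB k x a"
proof -
  let ?v = "r x a + CB k x a + \<gamma> * kapply (Phat k) (V k) x a"
  have "kapply P (V k) x a - kapply (Phat k) (V k) x a = (\<Sum>x'\<in>UNIV. (P x a x' - Phat k x a x') * V k x')"
    by (simp add: kapply_def sum_subtractf algebra_simps)
  then have err: "\<bar>\<gamma> * kapply P (V k) x a - \<gamma> * kapply (Phat k) (V k) x a\<bar> \<le> CB k x a"
    using valid[OF assms] by (simp add: right_diff_distrib[symmetric])
  have PV: "0 \<le> kapply P (V k) x a \<and> kapply P (V k) x a \<le> H"
    using kapply_bounds[OF kernel] V_bounds[OF assms] by blast
  then have "\<gamma> * kapply P (V k) x a \<le> \<gamma> * H" using gam by (intro mult_left_mono) auto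
  then have range: "0 \<le> r x a + \<gamma> * kapply P (V k) x a \<and> r x a + \<gamma> * kapply P (V k) x a \<le> H"
    using PV rew[of x a] gam H_eq by (auto intro: add_nonneg_nonneg)
  have Q: "Q (k + 1) x a = max (min ?v H) 0" using Q_rec[OF assms] by (simp add: clip_def)
  show "r x a + \<gamma> * kapply P (V k) x a \<le> Q (k + 1) x a"
    using Q range err by (auto simp: abs_le_iff)
  show "Q (k + 1) x a \<le> r x a + \<gamma> * kapply P (V k) x a + 2 * CB k x a"
    using Q range err CB_nonneg[OF assms, of x a] by (auto simp: abs_le_iff)
qed

lemma pair_occ_Q_gap:
  assumes "is_policy \<pi>"
  shows "pair (occ \<gamma> P nu0 \<pi>) (\<lambda>x a. Q (k + 1) x a - \<gamma> * kapply P (V k) x a)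
    = (\<Sum>x\<in>UNIV. occ_state \<gamma> P nu0 \<pi> x * ((\<Sum>a\<in>UNIV. \<pi> x a * Q (k + 1) x a) - V k x))
      + (1 - \<gamma>) * (\<Sum>x\<in>UNIV. nu0 x * V k x)"
  using pair_occ_kapply[OF kernel init assms gam, of "V k"]
  by (simp add: pair_diff pair_occ right_diff_distrib sum_subtractf)

lemma regret_le_Q_gap:
  assumes "1 \<le> k" "k \<le> K"
  shows "pair (occ \<gamma> P nu0 pol_s) r - pair (occ \<gamma> P nu0 (pol k)) r
    \<le> (\<Sum>x\<in>UNIV. nu_s x * ((\<Sum>a\<in>UNIV. pol_s x a * Q (k + 1) x a) - V k x))
      - (\<Sum>x\<in>UNIV. nu k x * ((\<Sum>a\<in>UNIV. pol k x a * Q (k + 1) x a) - V k x))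
      + 2 * pair (occ \<gamma> P nu0 (pol k)) (CB k)"
proof -
  let ?G = "\<lambda>x a. Q (k + 1) x a - \<gamma> * kapply P (V k) x a"
  have "pair (occ \<gamma> P nu0 pol_s) r \<le> pair (occ \<gamma> P nu0 pol_s) ?G"
    using occ_nonneg[OF kernel init comparator gam] Q_sandwich(1)[OF assms]
    by (intro pair_mono) (auto simp: algebra_simps)
  moreover have "pair (occ \<gamma> P nu0 (pol k)) ?G \<le> pair (occ \<gamma> P nu0 (pol k)) (\<lambda>x a. r x a + 2 * CB k x a)"
    using occ_nonneg[OF kernel init is_policy_pol gam] Q_sandwich(2)[OF assms] assms(2)
    by (intro pair_mono) (auto simp: algebra_simps)
  ultimately show ?thesis
    using pair_occ_Q_gap[OF comparator] pair_occ_Q_gap[OF is_policy_pol[OF assms(2)]]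
    by (simp add: pair_add pair_cmult)
qed

lemma learner_gap_ge:
  assumes "k \<le> K"
  shows "(\<Sum>x\<in>UNIV. nu k x * (V_next k x - V k x)) - \<eta> * H\<^sup>2 / 2
    \<le> (\<Sum>x\<in>UNIV. nu k x * ((\<Sum>a\<in>UNIV. pol k x a * Q (k + 1) x a) - V k x))"
proof -
  have nu: "is_dist (nu k)" by (rule is_dist_occ_state[OF kernel init is_policy_pol[OF assms] gam])
  have "V_next k x - \<eta> * H\<^sup>2 / 2 \<le> (\<Sum>a\<in>UNIV. pol k x a * Q (k + 1) x a)" for x
    using log_mgf_le_mean[of "pol k x" "Q (k + 1) x" H \<eta>] is_policy_pol[OF assms] Q_bounds assms
      eta H_pos by (simp add: V_next_def is_policy_def)
  then have "(\<Sum>x\<in>UNIV. nu k x * (V_next k x - \<eta> * H\<^sup>2 / 2 - V k x))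
      \<le> (\<Sum>x\<in>UNIV. nu k x * ((\<Sum>a\<in>UNIV. pol k x a * Q (k + 1) x a) - V k x))"
    using nu by (intro sum_mono mult_left_mono) (auto simp: is_dist_def)
  moreover have "(\<Sum>x\<in>UNIV. nu k x * (V_next k x - \<eta> * H\<^sup>2 / 2 - V k x))
      = (\<Sum>x\<in>UNIV. nu k x * (V_next k x - V k x)) - (\<Sum>x\<in>UNIV. nu k x * (\<eta> * H\<^sup>2 / 2))"
    unfolding sum_subtractf[symmetric] by (rule sum.cong) (simp_all add: algebra_simps)
  moreover have "(\<Sum>x\<in>UNIV. nu k x * (\<eta> * H\<^sup>2 / 2)) = \<eta> * H\<^sup>2 / 2"
    using nu unfolding sum_distrib_right[symmetric] by (simp add: is_dist_def)
  ultimately show ?thesis by simp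
qed

lemma occ_drift_le:
  assumes "k < K"
  shows "(\<Sum>x\<in>UNIV. nu (Suc k) x * V_next k x) - (\<Sum>x\<in>UNIV. nu k x * V_next k x) \<le> \<gamma> * \<eta> * H ^ 3 / 2"
proof -
  have pol: "is_policy (pol k)" "is_policy (pol (Suc k))" using is_policy_pol assms by auto
  have "(\<Sum>a\<in>UNIV. \<bar>pol (Suc k) x a - pol k x a\<bar>) \<le> \<eta> * H" for x
    unfolding pol_Suc[OF assms] pol_next_def using pol Q_bounds assms eta H_pos
    by (intro l1_dist_tilt_le) (auto simp: is_policy_def)
  then have l1: "(\<Sum>x\<in>UNIV. \<bar>nu (Suc k) x - nu k x\<bar>) \<le> \<gamma> * (\<eta> * H) / (1 - \<gamma>)"
    by (rule occ_state_l1_diff_le[OF kernel init pol(1,2) gam])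
  have "(\<Sum>x\<in>UNIV. nu (Suc k) x - nu k x) = 0"
    using is_dist_occ_state[OF kernel init pol(1) gam] is_dist_occ_state[OF kernel init pol(2) gam]
    by (simp add: sum_subtractf is_dist_def)
  then have "(\<Sum>x\<in>UNIV. (nu (Suc k) x - nu k x) * V_next k x)
      \<le> H / 2 * (\<Sum>x\<in>UNIV. \<bar>nu (Suc k) x - nu k x\<bar>)"
    using V_next_bounds assms by (intro sum_mult_le_half_sum_abs) auto
  also have "\<dots> \<le> H / 2 * (\<gamma> * (\<eta> * H) / (1 - \<gamma>))"
    using l1 H_pos by (intro mult_left_mono) auto
  also have "\<dots> = \<gamma> * \<eta> * H ^ 3 / 2" by (simp add: power3_eq_cube)
  finally show ?thesis by (simp add: left_diff_distrib sum_subtractf)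
qed

lemma comparator_value_telescope:
  assumes "1 \<le> K"
  shows "(\<Sum>k=1..K. (\<Sum>x\<in>UNIV. nu_s x * V_next k x) - (\<Sum>x\<in>UNIV. nu_s x * V k x)) \<le> H"
proof -
  let ?a = "\<lambda>k. - (\<Sum>x\<in>UNIV. nu_s x * V k x)" and ?b = "\<lambda>k. - (\<Sum>x\<in>UNIV. nu_s x * V_next k x)"
  have nu_s: "is_dist nu_s" by (rule is_dist_occ_state[OF kernel init comparator gam])
  have "(\<Sum>k=1..K. ?a k - ?b k) = ?a 1 - ?b K"
    using sum_diff_telescope[OF assms, of ?a ?b] V_Suc by simp
  also have "\<dots> = (\<Sum>x\<in>UNIV. nu_s x * V_next K x)" using V_1[OF assms] by simp
  also have "\<dots> \<le> (\<Sum>x\<in>UNIV. nu_s x * H)"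
    using nu_s V_next_bounds by (intro sum_mono mult_left_mono) (auto simp: is_dist_def)
  also have "\<dots> = H" using nu_s unfolding sum_distrib_right[symmetric] by (simp add: is_dist_def)
  finally show ?thesis by simp
qed

lemma learner_value_telescope:
  assumes "1 \<le> K"
  shows "(\<Sum>k=1..K. (\<Sum>x\<in>UNIV. nu k x * V k x) - (\<Sum>x\<in>UNIV. nu k x * V_next k x))
    \<le> real K * (\<gamma> * \<eta> * H ^ 3 / 2)"
proof -
  let ?a = "\<lambda>k. \<Sum>x\<in>UNIV. nu k x * V k x" and ?b = "\<lambda>k. \<Sum>x\<in>UNIV. nu k x * V_next k x"
  have "0 \<le> ?b K"
    using is_dist_occ_state[OF kernel init is_policy_pol gam] V_next_bounds
    by (intro sum_nonneg mult_nonneg_nonneg) (auto simp: is_dist_def)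
  moreover have "(\<Sum>k=1..<K. ?a (Suc k) - ?b k) \<le> (\<Sum>k=1..<K. \<gamma> * \<eta> * H ^ 3 / 2)"
    using occ_drift_le V_Suc by (intro sum_mono) simp
  moreover have "(\<Sum>k=1..<K. \<gamma> * \<eta> * H ^ 3 / 2) \<le> real K * (\<gamma> * \<eta> * H ^ 3 / 2)"
    using gam eta H_pos by (simp add: mult_right_mono)
  ultimately show ?thesis
    using sum_diff_telescope[OF assms, of ?a ?b] V_1[OF assms] by simp
qed

context
  assumes supp: "\<And>x a. 0 < nu_s x \<Longrightarrow> 0 < pol_s x a \<Longrightarrow> 0 < pol 0 x a"
begin

abbreviation D :: "('x \<Rightarrow> 'a \<Rightarrow> real) \<Rightarrow> real" where
  "D \<pi> \<equiv> cond_rel_ent_fin \<gamma> P nu0 pol_s \<pi>"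

lemma comparator_gap_eq:
  assumes "k \<le> K"
  shows "(\<Sum>x\<in>UNIV. nu_s x * ((\<Sum>a\<in>UNIV. pol_s x a * Q (k + 1) x a) - V k x))
    = (\<Sum>x\<in>UNIV. nu_s x * (V_next k x - V k x)) + (D (pol k) - D (pol_next k)) / \<eta>"
proof -
  have "nu_s x * ((\<Sum>a\<in>UNIV. pol_s x a * Q (k + 1) x a) - V k x)
      = nu_s x * (V_next k x - V k x)
        + nu_s x * (KL_fin (pol_s x) (pol k x) - KL_fin (pol_s x) (pol_next k x)) / \<eta>" for x
  proof (cases "0 < nu_s x")
    case True
    have ps: "is_dist (pol_s x)" using comparator by (simp add: is_policy_def)
    have "(\<Sum>a\<in>UNIV. pol_s x a * Q (k + 1) x a) - V_next k x
        = (\<Sum>a\<in>UNIV. pol_s x a * (Q (k + 1) x a - V_next k x))"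
      using ps by (simp add: is_dist_def right_diff_distrib sum_subtractf flip: sum_distrib_right)
    also have "\<dots> = (KL_fin (pol_s x) (pol k x) - KL_fin (pol_s x) (pol_next k x)) / \<eta>"
      unfolding V_next_def pol_next_def
      using is_policy_pol[OF assms] Q_bounds assms eta ps supp True pol_pos[OF assms]
      by (intro KL_fin_tilt[where H = H]) (auto simp: is_policy_def)
    finally show ?thesis by (simp add: algebra_simps)
  next
    case False
    then show ?thesis
      using is_dist_occ_state[OF kernel init comparator gam] by (simp add: is_dist_def order_less_le)
  qed
  then show ?thesis
    by (simp add: sum.distrib cond_rel_ent_fin_def diff_divide_distrib sum_divide_distrib
        right_diff_distrib sum_subtractf)
qed

lemma episode_regret_le:
  assumes "1 \<le> k" "k \<le> K"
  shows "pair (occ \<gamma> P nu0 pol_s) r - pair (occ \<gamma> P nu0 (pol k)) r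
    \<le> 2 * pair (occ \<gamma> P nu0 (pol k)) (CB k)
      + ((\<Sum>x\<in>UNIV. nu_s x * V_next k x) - (\<Sum>x\<in>UNIV. nu_s x * V k x))
      + ((\<Sum>x\<in>UNIV. nu k x * V k x) - (\<Sum>x\<in>UNIV. nu k x * V_next k x))
      + (D (pol k) - D (pol_next k)) / \<eta> + \<eta> * H\<^sup>2 / 2"
  using regret_le_Q_gap[OF assms] comparator_gap_eq[OF assms(2)] learner_gap_ge[OF assms(2)]
  by (simp add: right_diff_distrib sum_subtractf)

lemma divergence_telescope:
  assumes "1 \<le> K"
  shows "(\<Sum>k=1..K. (D (pol k) - D (pol_next k)) / \<eta>) \<le> D (pol 0) / \<eta>"
proof -
  have "is_policy (pol_next K)" using is_policy_pol_next is_policy_pol by simp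
  then have "0 \<le> D (pol_next K)"
    using supp pol_pos is_dist_occ_state[OF kernel init comparator gam] comparator
    by (intro cond_rel_ent_fin_nonneg) (auto simp: pol_next_def tilt_pos)
  moreover have "(\<Sum>k=1..K. D (pol k) - D (pol_next k)) = D (pol 1) - D (pol_next K)"
    using sum_diff_telescope[OF assms, of "\<lambda>k. D (pol k)" "\<lambda>k. D (pol_next k)"] pol_Suc by simp
  ultimately show ?thesis
    using pol_1[OF assms] eta by (simp add: divide_right_mono flip: sum_divide_distrib)
qed

lemma regret_sum_le:
  "(\<Sum>k=1..K. pair (occ \<gamma> P nu0 pol_s) r - pair (occ \<gamma> P nu0 (pol k)) r)
    \<le> 2 * (\<Sum>k=1..K. pair (occ \<gamma> P nu0 (pol k)) (CB k)) + 2 * H + D (pol 0) / \<eta>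
      + \<eta> * H ^ 3 * real K / 2"
proof (cases "K = 0")
  case True
  have "0 \<le> D (pol 0)"
    using supp is_dist_occ_state[OF kernel init comparator gam] comparator pol0
    by (intro cond_rel_ent_fin_nonneg) auto
  then show ?thesis using True eta H_pos by simp
next
  case False
  then have K: "1 \<le> K" by simp
  have "(\<Sum>k=1..K. pair (occ \<gamma> P nu0 pol_s) r - pair (occ \<gamma> P nu0 (pol k)) r)
      \<le> (\<Sum>k=1..K. 2 * pair (occ \<gamma> P nu0 (pol k)) (CB k)
        + ((\<Sum>x\<in>UNIV. nu_s x * V_next k x) - (\<Sum>x\<in>UNIV. nu_s x * V k x))
        + ((\<Sum>x\<in>UNIV. nu k x * V k x) - (\<Sum>x\<in>UNIV. nu k x * V_next k x))
        + (D (pol k) - D (pol_next k)) / \<eta> + \<eta> * H\<^sup>2 / 2)"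
    by (intro sum_mono episode_regret_le) auto
  also have "\<dots> = 2 * (\<Sum>k=1..K. pair (occ \<gamma> P nu0 (pol k)) (CB k))
      + (\<Sum>k=1..K. (\<Sum>x\<in>UNIV. nu_s x * V_next k x) - (\<Sum>x\<in>UNIV. nu_s x * V k x))
      + (\<Sum>k=1..K. (\<Sum>x\<in>UNIV. nu k x * V k x) - (\<Sum>x\<in>UNIV. nu k x * V_next k x))
      + (\<Sum>k=1..K. (D (pol k) - D (pol_next k)) / \<eta>) + real K * (\<eta> * H\<^sup>2 / 2)"
    by (simp only: sum.distrib sum_distrib_left sum_constant card_atLeastAtMost) simp
  also have "\<dots> \<le> 2 * (\<Sum>k=1..K. pair (occ \<gamma> P nu0 (pol k)) (CB k)) + H
      + real K * (\<gamma> * \<eta> * H ^ 3 / 2) + D (pol 0) / \<eta> + real K * (\<eta> * H\<^sup>2 / 2)"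
    using comparator_value_telescope[OF K] learner_value_telescope[OF K] divergence_telescope[OF K]
    by linarith
  finally have "(\<Sum>k=1..K. pair (occ \<gamma> P nu0 pol_s) r - pair (occ \<gamma> P nu0 (pol k)) r)
      \<le> 2 * (\<Sum>k=1..K. pair (occ \<gamma> P nu0 (pol k)) (CB k)) + H
        + real K * (\<gamma> * \<eta> * H ^ 3 / 2) + D (pol 0) / \<eta> + real K * (\<eta> * H\<^sup>2 / 2)" .
  moreover have "real K * (\<gamma> * \<eta> * H ^ 3 / 2) + real K * (\<eta> * H\<^sup>2 / 2)
      = \<eta> * (H\<^sup>2 + \<gamma> * H ^ 3) * real K / 2"
    by (simp add: algebra_simps)
  ultimately show ?thesis using H_pos unfolding H_square_eq by linarith
qed

end

end

theorem lemma2: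
  fixes P :: "'x::finite \<Rightarrow> 'a::finite \<Rightarrow> 'x \<Rightarrow> real"
    and r :: "'x \<Rightarrow> 'a \<Rightarrow> real"
    and \<gamma> \<eta> :: real
    and nu0 :: "'x \<Rightarrow> real"
    and pol_s :: "'x \<Rightarrow> 'a \<Rightarrow> real"
    and pol :: "nat \<Rightarrow> 'x \<Rightarrow> 'a \<Rightarrow> real"
    and Q CB :: "nat \<Rightarrow> 'x \<Rightarrow> 'a \<Rightarrow> real"
    and V :: "nat \<Rightarrow> 'x \<Rightarrow> real"
    and Phat :: "nat \<Rightarrow> 'x \<Rightarrow> 'a \<Rightarrow> 'x \<Rightarrow> real"
    and K :: nat
  assumes kernel: "is_kernel P"
    and rew: "\<forall>x a. 0 \<le> r x a \<and> r x a \<le> 1"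
    and gam: "0 < \<gamma>" "\<gamma> < 1"
    and init: "is_dist nu0"
    and opt: "optimal_policy \<gamma> P r pol_s"
    and eta: "\<eta> > 0"
    and pi0: "is_policy (pol 0)"
    and Q1: "\<forall>x a. Q 1 x a = 0"
    and V_rec: "\<forall>k x. 1 \<le> k \<and> k \<le> K \<longrightarrow>
        V k x = (1 / \<eta>) * ln (\<Sum>a\<in>UNIV. pol (k - 1) x a * exp (\<eta> * Q k x a))"
    and pi_rec: "\<forall>k x a. 1 \<le> k \<and> k \<le> K \<longrightarrow>
        pol k x a = pol (k - 1) x a * exp (\<eta> * (Q k x a - V k x))"
    and Q_rec: "\<forall>k x a. 1 \<le> k \<and> k \<le> K \<longrightarrow>
        Q (k + 1) x a = clip (1 / (1 - \<gamma>)) (r x a + CB k x a + \<gamma> * kapply (Phat k) (V k) x a)"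
    and CB_nonneg: "\<forall>k x a. 1 \<le> k \<and> k \<le> K \<longrightarrow> CB k x a \<ge> 0"
    and valid: "\<forall>k x a. 1 \<le> k \<and> k \<le> K \<longrightarrow>
        \<bar>\<gamma> * (\<Sum>x'\<in>UNIV. (P x a x' - Phat k x a x') * V k x')\<bar> \<le> CB k x a"
  shows "ereal (\<Sum>k=1..K. pair (occ \<gamma> P nu0 pol_s) r - pair (occ \<gamma> P nu0 (pol k)) r)
     \<le> ereal (2 * (\<Sum>k=1..K. pair (occ \<gamma> P nu0 (pol k)) (CB k)) + 2 * (1 / (1 - \<gamma>)))
        + ereal (1 / \<eta>) * cond_rel_ent \<gamma> P nu0 pol_s (pol 0)
        + ereal (\<eta> * (1 / (1 - \<gamma>)) ^ 3 * real K / 2)"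
proof -
  interpret optimistic_mirror_descent P r \<gamma> \<eta> nu0 pol_s pol Q CB V Phat K
  proof
    fix k x assume k: "1 \<le> k" "k \<le> K"
    show "V k x = log_mgf \<eta> (pol (k - 1) x) (Q k x)"
      using V_rec k by (simp add: log_mgf_def mgf_def)
    show "pol k x = tilt \<eta> (pol (k - 1) x) (Q k x)"
      using pi_rec V_rec k by (auto simp: tilt_def log_mgf_def mgf_def)
  qed (use assms in \<open>auto simp: optimal_policy_def\<close>)
  show ?thesis
  proof (cases "\<forall>x a. 0 < nu_s x \<longrightarrow> 0 < pol_s x a \<longrightarrow> 0 < pol 0 x a")
    case True
    then have "cond_rel_ent \<gamma> P nu0 pol_s (pol 0) = ereal (D (pol 0))"
      using is_dist_occ_state[OF kernel init comparator gam] by (intro cond_rel_ent_eq_fin) auto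
    then show ?thesis using regret_sum_le True by simp
  next
    case False
    then have "cond_rel_ent \<gamma> P nu0 pol_s (pol 0) = \<infinity>" using cond_rel_ent_eq_infinity by blast
    then show ?thesis using eta by simp
  qed
qed

end
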